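(* Let $\rho,\lambda,\kappa$ be nonnegative integers with $P(\lambda+\kappa+1)\le\rho\le\frac34\lambda$. Let $\mathcal B$ be the set of integers $0\le l<q^\lambda$ for which there exist integers $0\le k_1,k_2<q^\kappa$ with $$a_P(lq^\kappa+k_1+k_2)-a_P(lq^\kappa+k_1)\ne a_P^{(\kappa+\rho)}(lq^\kappa+k_1+k_2)-a_P^{(\kappa+\rho)}(lq^\kappa+k_1).$$ Then $\#\mathcal B\ll q^{\lambda-\rho+P(\lambda+\kappa+1)}$.
   Context: Fix an integer $q\ge2$. For an integer $n\ge0$, $\varepsilon_i(n)$ is the $i$-th digit of $n$ in base $q$ ($\varepsilon_0$ the units digit). For real $x>0$, $T_q(x)=\lfloor\log x/\log q\rfloor$. $P:\mathbb{N}\to\mathbb{N}$ is a nondecreasing integer-valued function. For integers $x,y\ge0$, $a_P(x,y)=\sum_{i\ge0}\varepsilon_{i+P(y)}(x)\cdots\varepsilon_i(x)$ and $a_P(n)=a_P(n,T_q(n))$. For an integer $\rho\ge0$ and integer $n\ge1$, $a_P^{(\rho)}(n)=a_P(n\bmod q^\rho,T_q(n))$ (note: the block length is determined by $T_q(n)$, not by $T_q(n\bmod q^\rho)$). The implied constant depends at most on $q$. *)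

theory Defs
  imports Complex_Main
begin

definition digit :: "nat \<Rightarrow> nat \<Rightarrow> nat \<Rightarrow> nat" where
  "digit q i n = (n div q ^ i) mod q"

text \<open>T_q(x) = floor(log x / log q); for x = 0 Isabelle's ln 0 = 0 gives 0
  (only ever used at 0 where the value is irrelevant).\<close>
definition Tq :: "nat \<Rightarrow> nat \<Rightarrow> nat" where
  "Tq q n = nat \<lfloor>ln (real n) / ln (real q)\<rfloor>"

text \<open>a_P(x,y) = sum_{i>=0} eps_{i+P(y)}(x) ... eps_i(x). All terms with i > x
  vanish (since q^i > x), so the sum over i \<le> x is the full series.\<close>
definition aP2 :: "nat \<Rightarrow> (nat \<Rightarrow> nat) \<Rightarrow> nat \<Rightarrow> nat \<Rightarrow> nat" where
  "aP2 q P x y = (\<Sum>i\<le>x. \<Prod>j\<le>P y. digit q (i + j) x)"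

definition aP :: "nat \<Rightarrow> (nat \<Rightarrow> nat) \<Rightarrow> nat \<Rightarrow> nat" where
  "aP q P n = aP2 q P n (Tq q n)"

definition aPtrunc :: "nat \<Rightarrow> (nat \<Rightarrow> nat) \<Rightarrow> nat \<Rightarrow> nat \<Rightarrow> nat" where
  "aPtrunc q P \<rho> n = aP2 q P (n mod q ^ \<rho>) (Tq q n)"

definition badSet :: "nat \<Rightarrow> (nat \<Rightarrow> nat) \<Rightarrow> nat \<Rightarrow> nat \<Rightarrow> nat \<Rightarrow> nat set" where
  "badSet q P \<rho> lam \<kappa> = {l. l < q ^ lam \<and> (\<exists>k1 k2. k1 < q ^ \<kappa> \<and> k2 < q ^ \<kappa> \<and>
      int (aP q P (l * q ^ \<kappa> + k1 + k2)) - int (aP q P (l * q ^ \<kappa> + k1)) \<noteq>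
      int (aPtrunc q P (\<kappa> + \<rho>) (l * q ^ \<kappa> + k1 + k2)) - int (aPtrunc q P (\<kappa> + \<rho>) (l * q ^ \<kappa> + k1)))}"

end

theory Submission
  imports Defs
begin

text \<open>
  The difference \<open>a\<^sub>P(n) - a\<^sub>P\<^sup>(\<^sup>e\<^sup>)(n)\<close> is the contribution of the digit blocks that
  reach position \<open>e\<close>; since every block has length at most \<open>P(T\<^sub>q(n)) + 1\<close>, it depends only on
  \<open>T\<^sub>q(n)\<close> and on the digits of \<open>n\<close> from position \<open>e - P(T\<^sub>q(n))\<close> on. Put
  \<open>d = \<rho> - P(\<lambda>+\<kappa>+1)\<close>. Adding \<open>k\<^sub>2 < q\<^sup>\<kappa>\<close> to \<open>lq\<^sup>\<kappa> + k\<^sub>1\<close> produces at most one carry into \<open>l\<close>,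
  which leaves the digits from position \<open>\<kappa> + d\<close> on (and hence \<open>T\<^sub>q\<close>) untouched unless the last
  \<open>d\<close> digits of \<open>l\<close> all equal \<open>q - 1\<close>. So every bad \<open>l\<close> satisfies \<open>l \<equiv> -1 (mod q\<^sup>d)\<close>,
  and there are at most \<open>q\<^sup>\<lambda>\<^sup>-\<^sup>d\<close> of those; the bound holds with constant 1, and
  \<open>\<rho> \<le> 3\<lambda>/4\<close> is needed only in the weaker form \<open>\<rho> \<le> \<lambda>\<close>.
\<close>

lemma Tq_eq:
  assumes "q \<ge> 2" "q ^ m \<le> n" "n < q ^ (m + 1)"
  shows "Tq q n = m"
  using floor_log_nat_eq_if[OF assms(2,3,1)] by (simp add: Tq_def log_def)

lemma Tq_pow_le_less:
  assumes "q \<ge> 2" "n \<ge> 1"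
  shows "q ^ Tq q n \<le> n \<and> n < q ^ (Tq q n + 1)"
proof -
  obtain m where "q ^ m \<le> n" "n < q ^ (m + 1)" using ex_power_ivl1[OF assms] by auto
  thus ?thesis using Tq_eq[OF assms(1)] by auto
qed

lemma Tq_le:
  assumes "q \<ge> 2" "n < q ^ M"
  shows "Tq q n \<le> M"
proof (cases "n = 0")
  case False
  then have "q ^ Tq q n < q ^ M" using Tq_pow_le_less[OF assms(1)] assms(2) by (meson le_less_trans less_one not_le)
  thus ?thesis using assms(1) by (simp add: power_less_imp_less_exp less_imp_le)
qed (simp add: Tq_def)

lemma Tq_eq_add_Tq_div:
  assumes q: "q \<ge> 2" and pos: "n div q ^ E > 0"
  shows "Tq q n = E + Tq q (n div q ^ E)"
proof -
  define H t where "H = n div q ^ E" and "t = Tq q H"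
  have t: "q ^ t \<le> H" "H < q ^ (t + 1)" using Tq_pow_le_less[OF q, of H] pos by (auto simp: H_def t_def)
  have "q ^ (E + t) \<le> H * q ^ E" using t by (simp add: power_add mult.commute)
  also have "\<dots> \<le> n" by (simp add: H_def)
  finally have lo: "q ^ (E + t) \<le> n" .
  have "n < (H + 1) * q ^ E"
    using q by (simp add: H_def dividend_less_div_times)
  also have "\<dots> \<le> q ^ (t + 1) * q ^ E" using t by (intro mult_right_mono) auto
  also have "\<dots> = q ^ (E + t + 1)" by (simp add: power_add)
  finally show ?thesis using Tq_eq[OF q lo] by (simp add: H_def t_def)
qed

lemma digit_mod_pow:
  assumes "q > 0"
  shows "digit q k (n mod q ^ e) = (if k < e then digit q k n else 0)"
proof (cases "k < e")
  case True
  then have "q ^ e = q ^ k * q ^ (e - k)" by (simp flip: power_add)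
  then have "n mod q ^ e div q ^ k = n div q ^ k mod q ^ (e - k)"
    using assms by (simp add: mod_mult2_eq div_mult2_eq)
  moreover have "q dvd q ^ (e - k)" using True by simp
  ultimately show ?thesis using True by (simp add: digit_def mod_mod_cancel)
next
  case False
  have "n mod q ^ e < q ^ e" using assms by simp
  also have "\<dots> \<le> q ^ k" using False assms by (simp add: power_increasing)
  finally have "n mod q ^ e < q ^ k" .
  with False show ?thesis by (simp add: digit_def)
qed

lemma digit_eq_digit_div_pow:
  assumes "e \<le> k"
  shows "digit q k n = digit q (k - e) (n div q ^ e)"
proof -
  have "q ^ k = q ^ e * q ^ (k - e)" using assms by (simp flip: power_add)
  then show ?thesis by (simp add: digit_def div_mult2_eq)
qed

lemma aP2_eq_sum_atMost:
  assumes q: "q \<ge> 2" and "x \<le> N"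
  shows "aP2 q P x y = (\<Sum>i\<le>N. \<Prod>j\<le>P y. digit q (i + j) x)"
  unfolding aP2_def
proof (rule sum.mono_neutral_left)
  show "\<forall>i\<in>{..N} - {..x}. (\<Prod>j\<le>P y. digit q (i + j) x) = 0"
  proof
    fix i assume "i \<in> {..N} - {..x}"
    then have "x < i" by simp
    also have "i < 2 ^ i" by (rule less_exp)
    also have "\<dots> \<le> q ^ i" using q by (rule power_mono) simp
    finally have "x < q ^ i" .
    then have "digit q (i + 0) x = 0" by (simp add: digit_def)
    then show "(\<Prod>j\<le>P y. digit q (i + j) x) = 0" by (intro prod_zero bexI[of _ 0]) auto
  qed
qed (use assms in auto)

text \<open>The blocks of \<open>a\<^sub>P(n)\<close> reaching position \<open>e\<close>; \<open>N \<ge> n\<close> only bounds the summation range.\<close>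

definition aP_tail :: "nat \<Rightarrow> (nat \<Rightarrow> nat) \<Rightarrow> nat \<Rightarrow> nat \<Rightarrow> nat \<Rightarrow> nat" where
  "aP_tail q P e N n = (\<Sum>i | i \<le> N \<and> e \<le> i + P (Tq q n). \<Prod>j\<le>P (Tq q n). digit q (i + j) n)"

lemma aP_eq_aPtrunc_add_aP_tail:
  assumes q: "q \<ge> 2" and "n \<le> N"
  shows "aP q P n = aPtrunc q P e n + aP_tail q P e N n"
proof -
  define p where "p = P (Tq q n)"
  define f where "f x i = (\<Prod>j\<le>p. digit q (i + j) x)" for x i
  define R where "R = {i. e \<le> i + p}"
  have trunc: "f (n mod q ^ e) i = (if i \<in> R then 0 else f n i)" for i
  proof (cases "i \<in> R")
    case True
    then have "digit q (i + p) (n mod q ^ e) = 0" using q by (simp add: R_def digit_mod_pow)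
    then have "f (n mod q ^ e) i = 0" unfolding f_def by (intro prod_zero bexI[of _ p]) auto
    then show ?thesis using True by simp
  qed (use q in \<open>auto simp: R_def f_def digit_mod_pow intro!: prod.cong\<close>)
  have "n mod q ^ e \<le> N" using assms(2) by (meson le_trans mod_less_eq_dividend)
  then have "aPtrunc q P e n = sum (f n) ({..N} - R)"
    by (simp add: aPtrunc_def aP2_eq_sum_atMost[OF q] flip: f_def p_def) (simp add: trunc sum.If_cases Diff_eq)
  moreover have "aP_tail q P e N n = sum (f n) ({..N} \<inter> R)"
    unfolding aP_tail_def f_def R_def p_def by (rule sum.cong) auto
  moreover have "aP q P n = sum (f n) {..N}"
    by (simp add: aP_def aP2_eq_sum_atMost[OF q assms(2)] f_def p_def)
  ultimately show ?thesis by (simp add: sum.Int_Diff[of "{..N}" _ R] add.commute)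
qed

lemma aP_tail_eq_0:
  assumes "n < q ^ E" and "P (Tq q n) + E \<le> e"
  shows "aP_tail q P e N n = 0"
  unfolding aP_tail_def
proof (rule sum.neutral, intro ballI)
  fix i assume "i \<in> {i. i \<le> N \<and> e \<le> i + P (Tq q n)}"
  then have "digit q (i + P (Tq q n)) n = digit q (i + P (Tq q n) - E) 0"
    using assms by (simp add: digit_eq_digit_div_pow[of E])
  then have "digit q (i + P (Tq q n)) n = 0" by (simp add: digit_def)
  then show "(\<Prod>j\<le>P (Tq q n). digit q (i + j) n) = 0" by (intro prod_zero bexI[of _ "P (Tq q n)"]) auto
qed

lemma aP_tail_cong_div_pow:
  assumes q: "q \<ge> 2" and div_eq: "n1 div q ^ E = n2 div q ^ E"
    and "P (Tq q n1) + E \<le> e" and "P (Tq q n2) + E \<le> e"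
  shows "aP_tail q P e N n1 = aP_tail q P e N n2"
proof (cases "n1 div q ^ E = 0")
  case True
  then show ?thesis using assms by (simp add: aP_tail_eq_0 div_eq_0_iff)
next
  case False
  then have T: "Tq q n1 = Tq q n2"
    using div_eq Tq_eq_add_Tq_div[OF q, of n1 E] Tq_eq_add_Tq_div[OF q, of n2 E] by simp
  have "digit q k n1 = digit q k n2" if "E \<le> k" for k
    using that div_eq by (simp add: digit_eq_digit_div_pow[of E k])
  then show ?thesis
    unfolding aP_tail_def T using assms(4) by (intro sum.cong prod.cong refl) auto
qed

lemma aP_diff_eq_aPtrunc_diff:
  assumes q: "q \<ge> 2" and "mono P" and "n1 \<le> n2" and "n2 < q ^ M" and "P M + E \<le> e"
    and "n1 div q ^ E = n2 div q ^ E"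
  shows "int (aP q P n2) - int (aP q P n1) = int (aPtrunc q P e n2) - int (aPtrunc q P e n1)"
proof -
  have "P (Tq q n) + E \<le> e" if "n \<le> n2" for n
  proof -
    have "Tq q n \<le> M" using Tq_le[OF q] that assms(4) by simp
    then show ?thesis using assms(2,5) monoD[of P] by fastforce
  qed
  then have "aP_tail q P e n2 n1 = aP_tail q P e n2 n2"
    using assms(3,6) by (intro aP_tail_cong_div_pow[OF q]) auto
  then show ?thesis
    using aP_eq_aPtrunc_add_aP_tail[OF q assms(3), of P e] aP_eq_aPtrunc_add_aP_tail[OF q order_refl[of n2], of P e]
    by simp
qed

lemma add_div_pow_eq_if_no_carry:
  fixes q :: nat
  assumes q: "q > 0" and "k1 < q ^ \<kappa>" and "k2 < q ^ \<kappa>" and "l mod q ^ d \<noteq> q ^ d - 1"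
  shows "(l * q ^ \<kappa> + k1 + k2) div q ^ (\<kappa> + d) = (l * q ^ \<kappa> + k1) div q ^ (\<kappa> + d)"
proof -
  have shift: "(l * q ^ \<kappa> + k) div q ^ (\<kappa> + d) = (l + k div q ^ \<kappa>) div q ^ d" for k
    using q by (simp add: power_add div_mult2_eq)
  have "(k1 + k2) div q ^ \<kappa> < 2"
    using assms(2,3) q by (simp add: div_less_iff_less_mult)
  then consider "(k1 + k2) div q ^ \<kappa> = 0" | "(k1 + k2) div q ^ \<kappa> = 1" by linarith
  moreover have "Suc l div q ^ d = l div q ^ d"
    using assms(4) q by (simp add: div_Suc mod_Suc)
  ultimately show ?thesis
    using shift[of "k1 + k2"] shift[of k1] assms(2) by (cases; simp add: add.assoc)
qed

lemma card_mod_pow_eq_minus_one_le: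
  fixes q :: nat
  assumes "q > 0" and "d \<le> lam"
  shows "card {l. l < q ^ lam \<and> l mod q ^ d = q ^ d - 1} \<le> q ^ (lam - d)"
proof -
  have "{l. l < q ^ lam \<and> l mod q ^ d = q ^ d - 1} \<subseteq> (\<lambda>h. h * q ^ d + (q ^ d - 1)) ` {..<q ^ (lam - d)}"
  proof
    fix l assume l: "l \<in> {l. l < q ^ lam \<and> l mod q ^ d = q ^ d - 1}"
    have "q ^ lam = q ^ (lam - d) * q ^ d" using assms(2) by (simp flip: power_add)
    then have "l div q ^ d < q ^ (lam - d)" using l assms(1) by (simp add: div_less_iff_less_mult)
    moreover have "l = l div q ^ d * q ^ d + (q ^ d - 1)" using l div_mult_mod_eq[of l "q ^ d"] by simp
    ultimately show "l \<in> (\<lambda>h. h * q ^ d + (q ^ d - 1)) ` {..<q ^ (lam - d)}" by blast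
  qed
  then have "card {l. l < q ^ lam \<and> l mod q ^ d = q ^ d - 1}
      \<le> card ((\<lambda>h. h * q ^ d + (q ^ d - 1)) ` {..<q ^ (lam - d)})"
    by (intro card_mono) auto
  also have "\<dots> \<le> q ^ (lam - d)" using card_image_le[of "{..<q ^ (lam - d)}"] by simp
  finally show ?thesis .
qed

lemma badSet_subset:
  fixes q \<rho> lam \<kappa> :: nat and P :: "nat \<Rightarrow> nat"
  defines "d \<equiv> \<rho> - P (lam + \<kappa> + 1)"
  assumes q: "q \<ge> 2" and "mono P" and "P (lam + \<kappa> + 1) \<le> \<rho>"
  shows "badSet q P \<rho> lam \<kappa> \<subseteq> {l. l < q ^ lam \<and> l mod q ^ d = q ^ d - 1}"
proof
  fix l assume "l \<in> badSet q P \<rho> lam \<kappa>"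
  then obtain k1 k2 where l: "l < q ^ lam" and k: "k1 < q ^ \<kappa>" "k2 < q ^ \<kappa>" and
    bad: "int (aP q P (l * q ^ \<kappa> + k1 + k2)) - int (aP q P (l * q ^ \<kappa> + k1)) \<noteq>
      int (aPtrunc q P (\<kappa> + \<rho>) (l * q ^ \<kappa> + k1 + k2)) - int (aPtrunc q P (\<kappa> + \<rho>) (l * q ^ \<kappa> + k1))"
    unfolding badSet_def by blast
  have "l * q ^ \<kappa> + k1 + k2 < (l + 2) * q ^ \<kappa>" using k by (simp add: algebra_simps)
  also have "\<dots> \<le> q ^ (lam + 1) * q ^ \<kappa>"
  proof -
    have "l + 2 \<le> 2 * q ^ lam" using l q by (simp add: Suc_le_eq)
    also have "\<dots> \<le> q ^ (lam + 1)" using q by simp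
    finally show ?thesis by (intro mult_right_mono) auto
  qed
  finally have bound: "l * q ^ \<kappa> + k1 + k2 < q ^ (lam + \<kappa> + 1)" by (simp add: power_add mult_ac)
  show "l \<in> {l. l < q ^ lam \<and> l mod q ^ d = q ^ d - 1}"
  proof (rule ccontr)
    assume "l \<notin> {l. l < q ^ lam \<and> l mod q ^ d = q ^ d - 1}"
    then have "(l * q ^ \<kappa> + k1 + k2) div q ^ (\<kappa> + d) = (l * q ^ \<kappa> + k1) div q ^ (\<kappa> + d)"
      using l k q by (intro add_div_pow_eq_if_no_carry) auto
    then show False
      using bad aP_diff_eq_aPtrunc_diff[OF q \<open>mono P\<close> _ bound, of "l * q ^ \<kappa> + k1" "\<kappa> + d" "\<kappa> + \<rho>"] assms(4)
      by (simp add: d_def)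
  qed
qed

theorem mainTheorem3:
  fixes q :: nat
  assumes "q \<ge> 2"
  shows "\<exists>C>0. \<forall>P :: nat \<Rightarrow> nat. \<forall>\<rho> lam \<kappa> :: nat.
           mono P \<longrightarrow> P (lam + \<kappa> + 1) \<le> \<rho> \<longrightarrow> real \<rho> \<le> 3 / 4 * real lam \<longrightarrow>
           real (card (badSet q P \<rho> lam \<kappa>)) \<le> C * real q ^ (lam - \<rho> + P (lam + \<kappa> + 1))"
proof (intro exI[of _ 1] conjI allI impI)
  fix P :: "nat \<Rightarrow> nat" and \<rho> lam \<kappa> :: nat
  assume "mono P" and P_le: "P (lam + \<kappa> + 1) \<le> \<rho>" and "real \<rho> \<le> 3 / 4 * real lam"
  then have "\<rho> \<le> lam" by linarith
  define d where "d = \<rho> - P (lam + \<kappa> + 1)"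
  have "card (badSet q P \<rho> lam \<kappa>) \<le> card {l. l < q ^ lam \<and> l mod q ^ d = q ^ d - 1}"
    using badSet_subset[OF assms \<open>mono P\<close> P_le] by (intro card_mono) (auto simp: d_def)
  also have "\<dots> \<le> q ^ (lam - d)"
    using assms \<open>\<rho> \<le> lam\<close> by (intro card_mod_pow_eq_minus_one_le) (auto simp: d_def)
  also have "lam - d = lam - \<rho> + P (lam + \<kappa> + 1)"
    using P_le \<open>\<rho> \<le> lam\<close> by (simp add: d_def)
  finally show "real (card (badSet q P \<rho> lam \<kappa>)) \<le> 1 * real q ^ (lam - \<rho> + P (lam + \<kappa> + 1))"
    by (simp flip: of_nat_power)
qed simp

end
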